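(* Let $\mathcal{H}^c_{A_{n-1}}$ be the degenerate affine Hecke–Clifford algebra of type $A_{n-1}$. Let $\gamma=(\gamma_1,\dots,\gamma_k)$ be a composition of $n$, let $B_j=\{\gamma_1+\dots+\gamma_{j-1}+1,\dots,\gamma_1+\dots+\gamma_j\}$, and let $w_\gamma\in S_n$ be the product over $j$ of the cycles $(a\ \ a+1\ \cdots\ b)$ where $B_j=\{a,\dots,b\}$. Let $I\subseteq\{1,\dots,n\}$ with $|I|$ even, and $I_j=I\cap B_j$. If every $|I_j|$ is even, then $w_\gamma c_I-\epsilon w_\gamma\in[\mathcal{H}^c_{A_{n-1}},\mathcal{H}^c_{A_{n-1}}]$ for some $\epsilon\in\{1,-1\}$; otherwise $w_\gamma c_I\in[\mathcal{H}^c_{A_{n-1}},\mathcal{H}^c_{A_{n-1}}]$.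
   Context: $\mathcal{H}^c_{A_{n-1}}$ (parameter $u\in\mathbb{C}$) is the $\mathbb{C}$-algebra generated by commuting $x_1,\dots,x_n$, Clifford generators $c_1,\dots,c_n$ ($c_i^2=1$, $c_ic_j=-c_jc_i$ for $i\ne j$) and $S_n$ (simple reflections $s_i=(i,i+1)$), with $\mathbb{C}[x]$, the Clifford algebra and $\mathbb{C}S_n$ subalgebras and relations $x_ic_i=-c_ix_i$, $x_ic_j=c_jx_i$ ($i\ne j$), $\sigma c_i=c_{\sigma(i)}\sigma$ ($\sigma\in S_n$), $x_{i+1}s_i-s_ix_i=u(1-c_{i+1}c_i)$, $x_js_i=s_ix_j$ ($j\ne i,i+1$). A composition of $n$ is a sequence of positive integers summing to $n$. For $I=\{i_1<\dots<i_m\}$, $c_I=c_{i_1}\cdots c_{i_m}$. $[H,H]$ is the linear span of all $hh'-h'h$. *)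

theory Defs
  imports Complex_Main
begin

text \<open>Generators of the free algebra: X i = x_i, C i = c_i, S i = s_i = (i,i+1) (1-based).\<close>
datatype gen = X nat | C nat | S nat

text \<open>Free associative unital C-algebra on gen: finitely supported functions on words.\<close>
type_synonym fa = "gen list \<Rightarrow> complex"

definition fin_supp :: "fa \<Rightarrow> bool" where
  "fin_supp f \<longleftrightarrow> finite {w. f w \<noteq> 0}"

definition fa_zero :: fa where "fa_zero = (\<lambda>_. 0)"
definition fa_add :: "fa \<Rightarrow> fa \<Rightarrow> fa" where "fa_add f g = (\<lambda>w. f w + g w)"
definition fa_sub :: "fa \<Rightarrow> fa \<Rightarrow> fa" where "fa_sub f g = (\<lambda>w. f w - g w)"
definition fa_smult :: "complex \<Rightarrow> fa \<Rightarrow> fa" where "fa_smult a f = (\<lambda>w. a * f w)"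
definition fa_mul :: "fa \<Rightarrow> fa \<Rightarrow> fa" where
  "fa_mul f g = (\<lambda>w. \<Sum>i\<le>length w. f (take i w) * g (drop i w))"
definition mon :: "gen list \<Rightarrow> fa" where
  "mon w = (\<lambda>v. if v = w then 1 else 0)"

inductive_set ideal_of :: "fa set \<Rightarrow> fa set" for R where
  zero: "fa_zero \<in> ideal_of R"
| gen: "r \<in> R \<Longrightarrow> fa_mul (mon a) (fa_mul r (mon b)) \<in> ideal_of R"
| add: "f \<in> ideal_of R \<Longrightarrow> g \<in> ideal_of R \<Longrightarrow> fa_add f g \<in> ideal_of R"
| smult: "f \<in> ideal_of R \<Longrightarrow> fa_smult a f \<in> ideal_of R"

inductive_set comm_span :: "fa set" where
  zero: "fa_zero \<in> comm_span"
| comm: "fin_supp f \<Longrightarrow> fin_supp g \<Longrightarrow> fa_sub (fa_mul f g) (fa_mul g f) \<in> comm_span"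
| add: "f \<in> comm_span \<Longrightarrow> g \<in> comm_span \<Longrightarrow> fa_add f g \<in> comm_span"
| smult: "f \<in> comm_span \<Longrightarrow> fa_smult a f \<in> comm_span"

definition tr :: "nat \<Rightarrow> nat \<Rightarrow> nat" where
  "tr i j = (if j = i then i + 1 else if j = i + 1 then i else j)"

text \<open>Defining relations (as elements lhs - rhs) of the degenerate affine Hecke-Clifford
  algebra of type A_{n-1} with parameter u. Generators with out-of-range index are killed,
  so the quotient is generated by x_1..x_n, c_1..c_n, s_1..s_{n-1}.\<close>
definition hc_rels :: "nat \<Rightarrow> complex \<Rightarrow> fa set" where
  "hc_rels n u =
     {mon [X i] | i. i < 1 \<or> n < i} \<union>
     {mon [C i] | i. i < 1 \<or> n < i} \<union>
     {mon [S i] | i. i < 1 \<or> n \<le> i} \<union>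
     {fa_sub (mon [X i, X j]) (mon [X j, X i]) | i j. i \<in> {1..n} \<and> j \<in> {1..n}} \<union>
     {fa_sub (mon [C i, C i]) (mon []) | i. i \<in> {1..n}} \<union>
     {fa_add (mon [C i, C j]) (mon [C j, C i]) | i j. i \<in> {1..n} \<and> j \<in> {1..n} \<and> i \<noteq> j} \<union>
     {fa_sub (mon [S i, S i]) (mon []) | i. i \<in> {1..<n}} \<union>
     {fa_sub (mon [S i, S (i+1), S i]) (mon [S (i+1), S i, S (i+1)]) | i. i \<in> {1..<n} \<and> i + 1 \<in> {1..<n}} \<union>
     {fa_sub (mon [S i, S j]) (mon [S j, S i]) | i j. i \<in> {1..<n} \<and> j \<in> {1..<n} \<and> (i + 1 < j \<or> j + 1 < i)} \<union>
     {fa_add (mon [X i, C i]) (mon [C i, X i]) | i. i \<in> {1..n}} \<union>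
     {fa_sub (mon [X i, C j]) (mon [C j, X i]) | i j. i \<in> {1..n} \<and> j \<in> {1..n} \<and> i \<noteq> j} \<union>
     {fa_sub (mon [S i, C j]) (mon [C (tr i j), S i]) | i j. i \<in> {1..<n} \<and> j \<in> {1..n}} \<union>
     {fa_sub (fa_sub (mon [X (i+1), S i]) (mon [S i, X i]))
             (fa_smult u (fa_sub (mon []) (mon [C (i+1), C i]))) | i. i \<in> {1..<n}} \<union>
     {fa_sub (mon [X j, S i]) (mon [S i, X j]) | i j. i \<in> {1..<n} \<and> j \<in> {1..n} \<and> j \<noteq> i \<and> j \<noteq> i + 1}"

text \<open>h lies in [H,H] for H = F / J (J the ideal of relations) iff a representative
  lies in [F,F] + J.\<close>
definition in_HH_comm :: "nat \<Rightarrow> complex \<Rightarrow> fa \<Rightarrow> bool" where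
  "in_HH_comm n u h \<longleftrightarrow> (\<exists>a b. a \<in> comm_span \<and> b \<in> ideal_of (hc_rels n u) \<and> h = fa_add a b)"

text \<open>Block B_j (0-based j) of a composition gamma.\<close>
definition block :: "nat list \<Rightarrow> nat \<Rightarrow> nat set" where
  "block \<gamma> j = {sum_list (take j \<gamma>) + 1 .. sum_list (take (Suc j) \<gamma>)}"

text \<open>Word for the cycle (a a+1 ... b) = s_a s_{a+1} ... s_{b-1}, and for w_gamma.\<close>
definition cycle_word :: "nat \<Rightarrow> nat \<Rightarrow> gen list" where
  "cycle_word a b = map S [a..<b]"

definition w_word :: "nat list \<Rightarrow> gen list" where
  "w_word \<gamma> = concat (map (\<lambda>j. cycle_word (sum_list (take j \<gamma>) + 1) (sum_list (take (Suc j) \<gamma>)))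
                            [0..<length \<gamma>])"

definition c_word :: "nat set \<Rightarrow> gen list" where
  "c_word I = map C (sorted_list_of_set I)"

end

theory Submission
  imports Defs "HOL-Library.Multiset"
begin

text \<open>
  Work in the cocentre $H/[H,H]$, where words may be rotated cyclically. Rotating $c_k$ from
  the end of $w_\gamma c_L$ to the front and pushing it back through $w_\gamma$ turns it into
  $c_{k-1}$, or into $c_b$ if $k = a$ is the first index of its block $\{a,\dots,b\}$. Together
  with the Clifford relations (reordering up to sign, $c_k^2 = 1$) this reduces $c_L$, up to
  sign, to a product of distinct first indices of blocks, without changing the parity of the
  number of indices in each block. If all these parities are even nothing is left. Otherwise
  some block contributes exactly its first index $a$; rotating $c_a$ yields $-w_\gamma c_{L'} c_b$,
  while conjugation by the cycle of that block yields $+w_\gamma c_{L'} c_b$, so the word equals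
  its own negative in the cocentre.
\<close>

lemma fa_mul_mon_left:
  "fa_mul (mon p) g w = (if take (length p) w = p then g (drop (length p) w) else 0)"
proof -
  have "fa_mul (mon p) g w =
      (\<Sum>i\<le>length w. if i = length p then (if take (length p) w = p then g (drop (length p) w) else 0) else 0)"
    unfolding fa_mul_def mon_def by (rule sum.cong) (auto simp: min_def split: if_splits)
  also have "\<dots> = (if take (length p) w = p then g (drop (length p) w) else 0)"
    by (auto simp: min_def dest: arg_cong[of _ _ length])
  finally show ?thesis .
qed

lemma fa_mul_mon_mon: "fa_mul (mon a) (mon b) = mon (a @ b)"
  by (rule ext) (simp add: fa_mul_mon_left, auto simp: mon_def append_eq_conv_conj, metis append_take_drop_id)

lemma fa_mul_sub_left: "fa_mul (fa_sub f g) h = fa_sub (fa_mul f h) (fa_mul g h)"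
  by (rule ext) (simp add: fa_mul_def fa_sub_def sum_subtractf left_diff_distrib)

lemma fa_mul_sub_right: "fa_mul h (fa_sub f g) = fa_sub (fa_mul h f) (fa_mul h g)"
  by (rule ext) (simp add: fa_mul_def fa_sub_def sum_subtractf right_diff_distrib)

lemma fa_mul_add_left: "fa_mul (fa_add f g) h = fa_add (fa_mul f h) (fa_mul g h)"
  by (rule ext) (simp add: fa_mul_def fa_add_def sum.distrib distrib_right)

lemma fa_mul_add_right: "fa_mul h (fa_add f g) = fa_add (fa_mul h f) (fa_mul h g)"
  by (rule ext) (simp add: fa_mul_def fa_add_def sum.distrib distrib_left)

lemma fin_supp_mon: "fin_supp (mon w)"
  unfolding fin_supp_def mon_def by simp

lemma in_HH_comm_add:
  assumes "in_HH_comm n u f" and "in_HH_comm n u g"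
  shows "in_HH_comm n u (fa_add f g)"
proof -
  obtain f1 f2 g1 g2
    where f: "f1 \<in> comm_span" "f2 \<in> ideal_of (hc_rels n u)" "f = fa_add f1 f2"
      and g: "g1 \<in> comm_span" "g2 \<in> ideal_of (hc_rels n u)" "g = fa_add g1 g2"
    using assms unfolding in_HH_comm_def by blast
  have "fa_add f g = fa_add (fa_add f1 g1) (fa_add f2 g2)"
    using f(3) g(3) by (auto simp: fa_add_def)
  then show ?thesis
    unfolding in_HH_comm_def using f g by (blast intro: comm_span.add ideal_of.add)
qed

lemma in_HH_comm_smult:
  assumes "in_HH_comm n u f"
  shows "in_HH_comm n u (fa_smult a f)"
proof -
  obtain f1 f2 where f: "f1 \<in> comm_span" "f2 \<in> ideal_of (hc_rels n u)" "f = fa_add f1 f2"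
    using assms unfolding in_HH_comm_def by blast
  have "fa_smult a f = fa_add (fa_smult a f1) (fa_smult a f2)"
    using f(3) by (auto simp: fa_add_def fa_smult_def distrib_left)
  then show ?thesis
    unfolding in_HH_comm_def using f by (blast intro: comm_span.smult ideal_of.smult)
qed

lemma ideal_imp_in_HH_comm:
  assumes "f \<in> ideal_of (hc_rels n u)"
  shows "in_HH_comm n u f"
proof -
  have "f = fa_add fa_zero f"
    by (auto simp: fa_add_def fa_zero_def)
  then show ?thesis
    unfolding in_HH_comm_def using assms comm_span.zero by blast
qed

lemma comm_span_imp_in_HH_comm:
  assumes "f \<in> comm_span"
  shows "in_HH_comm n u f"
proof -
  have "f = fa_add f fa_zero"
    by (auto simp: fa_add_def fa_zero_def)
  then show ?thesis
    unfolding in_HH_comm_def using assms ideal_of.zero by blast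
qed

definition cocentre_eq :: "nat \<Rightarrow> complex \<Rightarrow> gen list \<Rightarrow> gen list \<Rightarrow> complex \<Rightarrow> bool" where
  "cocentre_eq n u P Q \<epsilon> \<longleftrightarrow> in_HH_comm n u (fa_sub (mon P) (fa_smult \<epsilon> (mon Q)))"

definition cocentre_eq_pm :: "nat \<Rightarrow> complex \<Rightarrow> gen list \<Rightarrow> gen list \<Rightarrow> bool" where
  "cocentre_eq_pm n u P Q \<longleftrightarrow> (\<exists>\<epsilon>\<in>{1, -1}. cocentre_eq n u P Q \<epsilon>)"

lemma cocentre_eq_refl: "cocentre_eq n u P P 1"
proof -
  have "fa_sub (mon P) (fa_smult 1 (mon P)) = fa_zero"
    by (auto simp: fa_sub_def fa_smult_def fa_zero_def)
  then show ?thesis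
    unfolding cocentre_eq_def by (simp add: comm_span_imp_in_HH_comm comm_span.zero)
qed

lemma cocentre_eq_trans:
  assumes "cocentre_eq n u P Q \<epsilon>" and "cocentre_eq n u Q' R \<delta>" and "Q = Q'"
  shows "cocentre_eq n u P R (\<epsilon> * \<delta>)"
proof -
  have "fa_sub (mon P) (fa_smult (\<epsilon> * \<delta>) (mon R)) =
      fa_add (fa_sub (mon P) (fa_smult \<epsilon> (mon Q))) (fa_smult \<epsilon> (fa_sub (mon Q) (fa_smult \<delta> (mon R))))"
    by (rule ext) (simp add: fa_add_def fa_sub_def fa_smult_def algebra_simps)
  then show ?thesis
    using assms unfolding cocentre_eq_def by (simp add: in_HH_comm_add in_HH_comm_smult)
qed

lemma cocentre_eq_sym:
  assumes "cocentre_eq n u P Q \<epsilon>" and "\<epsilon> \<in> {1, -1}"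
  shows "cocentre_eq n u Q P \<epsilon>"
proof -
  have "fa_sub (mon Q) (fa_smult \<epsilon> (mon P)) = fa_smult (- \<epsilon>) (fa_sub (mon P) (fa_smult \<epsilon> (mon Q)))"
    using assms(2) by (auto simp: fa_sub_def fa_smult_def)
  then show ?thesis
    using assms(1) unfolding cocentre_eq_def by (simp add: in_HH_comm_smult)
qed

lemma cocentre_eq_in_HH_comm:
  assumes "cocentre_eq n u P Q \<epsilon>" and "in_HH_comm n u (mon Q)"
  shows "in_HH_comm n u (mon P)"
proof -
  have "mon P = fa_add (fa_sub (mon P) (fa_smult \<epsilon> (mon Q))) (fa_smult \<epsilon> (mon Q))"
    by (auto simp: fa_add_def fa_sub_def fa_smult_def)
  then show ?thesis
    using assms unfolding cocentre_eq_def by (metis in_HH_comm_add in_HH_comm_smult)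
qed

text \<open>Division by 2 is where characteristic zero enters.\<close>
lemma cocentre_eq_self_neg: "cocentre_eq n u P P (-1) \<Longrightarrow> in_HH_comm n u (mon P)"
proof -
  assume "cocentre_eq n u P P (-1)"
  moreover have "mon P = fa_smult (1/2) (fa_sub (mon P) (fa_smult (-1) (mon P)))"
    by (auto simp: fa_sub_def fa_smult_def)
  ultimately show ?thesis
    unfolding cocentre_eq_def by (metis in_HH_comm_smult)
qed

lemma cocentre_eq_rotate: "cocentre_eq n u (A @ B) (B @ A) 1"
proof -
  have "fa_sub (fa_mul (mon A) (mon B)) (fa_mul (mon B) (mon A)) \<in> comm_span"
    by (intro comm_span.comm fin_supp_mon)
  then show ?thesis
    unfolding cocentre_eq_def by (simp add: fa_mul_mon_mon fa_smult_def comm_span_imp_in_HH_comm)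
qed

lemma cocentre_eq_of_rel_sub:
  assumes "fa_sub (mon l) (mon r) \<in> hc_rels n u"
  shows "cocentre_eq n u (p @ l @ q) (p @ r @ q) 1"
proof -
  have "fa_mul (mon p) (fa_mul (fa_sub (mon l) (mon r)) (mon q)) \<in> ideal_of (hc_rels n u)"
    using assms by (rule ideal_of.gen)
  moreover have "fa_mul (mon p) (fa_mul (fa_sub (mon l) (mon r)) (mon q)) =
      fa_sub (mon (p @ l @ q)) (fa_smult 1 (mon (p @ r @ q)))"
    by (simp add: fa_mul_sub_left fa_mul_sub_right fa_mul_mon_mon fa_smult_def)
  ultimately show ?thesis
    unfolding cocentre_eq_def by (simp add: ideal_imp_in_HH_comm)
qed

lemma cocentre_eq_of_rel_add:
  assumes "fa_add (mon l) (mon r) \<in> hc_rels n u"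
  shows "cocentre_eq n u (p @ l @ q) (p @ r @ q) (-1)"
proof -
  have "fa_mul (mon p) (fa_mul (fa_add (mon l) (mon r)) (mon q)) \<in> ideal_of (hc_rels n u)"
    using assms by (rule ideal_of.gen)
  moreover have "fa_mul (mon p) (fa_mul (fa_add (mon l) (mon r)) (mon q)) =
      fa_sub (mon (p @ l @ q)) (fa_smult (-1) (mon (p @ r @ q)))"
    by (simp only: fa_mul_add_left fa_mul_add_right fa_mul_mon_mon)
      (auto simp: fa_smult_def fa_add_def fa_sub_def)
  ultimately show ?thesis
    unfolding cocentre_eq_def by (simp add: ideal_imp_in_HH_comm)
qed

lemma cocentre_eq_pmI: "cocentre_eq n u P Q \<epsilon> \<Longrightarrow> \<epsilon> \<in> {1, -1} \<Longrightarrow> cocentre_eq_pm n u P Q"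
  unfolding cocentre_eq_pm_def by blast

lemma cocentre_eq_pm_refl: "cocentre_eq_pm n u P P"
  using cocentre_eq_pmI cocentre_eq_refl by blast

lemma cocentre_eq_pm_trans:
  assumes "cocentre_eq_pm n u P Q" and "cocentre_eq_pm n u Q R"
  shows "cocentre_eq_pm n u P R"
proof -
  obtain \<epsilon> \<delta> where "\<epsilon> \<in> {1, -1}" "\<delta> \<in> {1, -1}" "cocentre_eq n u P Q \<epsilon>" "cocentre_eq n u Q R \<delta>"
    using assms unfolding cocentre_eq_pm_def by blast
  then show ?thesis
    by (intro cocentre_eq_pmI[of n u P R "\<epsilon> * \<delta>"]) (auto intro: cocentre_eq_trans)
qed

lemma cocentre_eq_pm_in_HH_comm:
  "cocentre_eq_pm n u P Q \<Longrightarrow> in_HH_comm n u (mon Q) \<Longrightarrow> in_HH_comm n u (mon P)"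
  unfolding cocentre_eq_pm_def using cocentre_eq_in_HH_comm by blast

lemma tr_mem: "i \<in> {1..<n} \<Longrightarrow> k \<in> {1..n} \<Longrightarrow> tr i k \<in> {1..n}"
  unfolding tr_def by auto

lemma tr_tr: "tr i (tr i k) = k"
  unfolding tr_def by auto

lemma fold_tr_fixed: "\<forall>i\<in>set rs. k \<noteq> i \<and> k \<noteq> i + 1 \<Longrightarrow> fold tr rs k = k"
  by (induction rs) (auto simp: tr_def)

lemma fold_tr_upt:
  "a \<le> b \<Longrightarrow> fold tr [a..<b] k = (if k = a then b else if a < k \<and> k \<le> b then k - 1 else k)"
proof (induction b)
  case (Suc b)
  then show ?case
    by (cases "a = Suc b") (auto simp: tr_def)
qed simp

context
  fixes n :: nat and u :: complex
begin

lemma cocentre_eq_C_cancel: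
  assumes "k \<in> {1..n}"
  shows "cocentre_eq n u (p @ C k # C k # q) (p @ q) 1"
proof -
  have "fa_sub (mon [C k, C k]) (mon []) \<in> hc_rels n u"
    using assms unfolding hc_rels_def by blast
  from cocentre_eq_of_rel_sub[OF this] show ?thesis by simp
qed

lemma cocentre_eq_C_swap:
  assumes "k \<in> {1..n}" and "j \<in> {1..n}" and "k \<noteq> j"
  shows "cocentre_eq n u (p @ C k # C j # q) (p @ C j # C k # q) (-1)"
proof -
  have "fa_add (mon [C k, C j]) (mon [C j, C k]) \<in> hc_rels n u"
    using assms unfolding hc_rels_def by blast
  from cocentre_eq_of_rel_add[OF this] show ?thesis by simp
qed

lemma cocentre_eq_S_C:
  assumes "i \<in> {1..<n}" and "k \<in> {1..n}"
  shows "cocentre_eq n u (p @ S i # C k # q) (p @ C (tr i k) # S i # q) 1"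
proof -
  have "fa_sub (mon [S i, C k]) (mon [C (tr i k), S i]) \<in> hc_rels n u"
    using assms unfolding hc_rels_def by blast
  from cocentre_eq_of_rel_sub[OF this] show ?thesis by simp
qed

lemma cocentre_eq_C_S:
  assumes "i \<in> {1..<n}" and "k \<in> {1..n}"
  shows "cocentre_eq n u (p @ C k # S i # q) (p @ S i # C (tr i k) # q) 1"
proof -
  have "cocentre_eq n u (p @ S i # C (tr i k) # q) (p @ C (tr i (tr i k)) # S i # q) 1"
    using assms by (intro cocentre_eq_S_C tr_mem)
  from cocentre_eq_sym[OF this] show ?thesis by (simp add: tr_tr)
qed

lemma cocentre_eq_S_commute:
  assumes "i \<in> {1..<n}" and "j \<in> {1..<n}" and "i + 1 < j \<or> j + 1 < i"
  shows "cocentre_eq n u (p @ S i # S j # q) (p @ S j # S i # q) 1"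
proof -
  have "fa_sub (mon [S i, S j]) (mon [S j, S i]) \<in> hc_rels n u"
    using assms unfolding hc_rels_def by blast
  from cocentre_eq_of_rel_sub[OF this] show ?thesis by simp
qed

lemma cocentre_eq_C_past_S_word:
  "set rs \<subseteq> {1..<n} \<Longrightarrow> k \<in> {1..n} \<Longrightarrow>
    cocentre_eq n u (p @ C k # map S rs @ q) (p @ map S rs @ C (fold tr rs k) # q) 1"
proof (induction rs arbitrary: p k)
  case Nil
  then show ?case by (simp add: cocentre_eq_refl)
next
  case (Cons i rs)
  have 1: "cocentre_eq n u (p @ C k # S i # map S rs @ q) (p @ S i # C (tr i k) # map S rs @ q) 1"
    using Cons.prems by (intro cocentre_eq_C_S) auto
  have 2: "cocentre_eq n u ((p @ [S i]) @ C (tr i k) # map S rs @ q)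
      ((p @ [S i]) @ map S rs @ C (fold tr rs (tr i k)) # q) 1"
    using Cons.prems by (intro Cons.IH tr_mem) auto
  show ?case
    using cocentre_eq_trans[OF 1 2] by simp
qed

lemma cocentre_eq_C_word_past_S_word:
  "set rs \<subseteq> {1..<n} \<Longrightarrow> set L \<subseteq> {1..n} \<Longrightarrow>
    cocentre_eq n u (p @ map C L @ map S rs @ q) (p @ map S rs @ map C (map (fold tr rs) L) @ q) 1"
proof (induction L arbitrary: p)
  case Nil
  then show ?case by (simp add: cocentre_eq_refl)
next
  case (Cons k L)
  have 1: "cocentre_eq n u ((p @ [C k]) @ map C L @ map S rs @ q)
      ((p @ [C k]) @ map S rs @ map C (map (fold tr rs) L) @ q) 1"
    using Cons.IH[of "p @ [C k]"] Cons.prems by simp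
  have 2: "cocentre_eq n u (p @ C k # map S rs @ map C (map (fold tr rs) L) @ q)
      (p @ map S rs @ C (fold tr rs k) # map C (map (fold tr rs) L) @ q) 1"
    using Cons.prems by (intro cocentre_eq_C_past_S_word) auto
  show ?case
    using cocentre_eq_trans[OF 1 2] by simp
qed

lemma cocentre_eq_S_past_S_word:
  "set rs \<subseteq> {1..<n} \<Longrightarrow> i \<in> {1..<n} \<Longrightarrow> \<forall>j\<in>set rs. i + 1 < j \<or> j + 1 < i \<Longrightarrow>
    cocentre_eq n u (p @ S i # map S rs @ q) (p @ map S rs @ S i # q) 1"
proof (induction rs arbitrary: p)
  case Nil
  then show ?case by (simp add: cocentre_eq_refl)
next
  case (Cons j rs)
  have 1: "cocentre_eq n u (p @ S i # S j # map S rs @ q) (p @ S j # S i # map S rs @ q) 1"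
    using Cons.prems by (intro cocentre_eq_S_commute) auto
  have 2: "cocentre_eq n u ((p @ [S j]) @ S i # map S rs @ q) ((p @ [S j]) @ map S rs @ S i # q) 1"
    using Cons.IH[of "p @ [S j]"] Cons.prems by simp
  show ?case
    using cocentre_eq_trans[OF 1 2] by simp
qed

lemma cocentre_eq_S_words_commute:
  "set rs \<subseteq> {1..<n} \<Longrightarrow> set ts \<subseteq> {1..<n} \<Longrightarrow> \<forall>i\<in>set rs. \<forall>j\<in>set ts. i + 1 < j \<or> j + 1 < i \<Longrightarrow>
    cocentre_eq n u (p @ map S rs @ map S ts @ q) (p @ map S ts @ map S rs @ q) 1"
proof (induction rs arbitrary: p)
  case Nil
  then show ?case by (simp add: cocentre_eq_refl)
next
  case (Cons i rs)
  have 1: "cocentre_eq n u ((p @ [S i]) @ map S rs @ map S ts @ q) ((p @ [S i]) @ map S ts @ map S rs @ q) 1"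
    using Cons.IH[of "p @ [S i]"] Cons.prems by simp
  have 2: "cocentre_eq n u (p @ S i # map S ts @ map S rs @ q) (p @ map S ts @ S i # map S rs @ q) 1"
    using Cons.prems by (intro cocentre_eq_S_past_S_word) auto
  show ?case
    using cocentre_eq_trans[OF 1 2] by simp
qed

lemma cocentre_eq_C_move_front:
  "set (a @ x # b) \<subseteq> {1..n} \<Longrightarrow> cocentre_eq_pm n u (p @ map C (a @ x # b)) (p @ C x # map C (a @ b))"
proof (induction a arbitrary: p)
  case Nil
  then show ?case by (simp add: cocentre_eq_pm_refl)
next
  case (Cons y a)
  have 1: "cocentre_eq_pm n u (p @ map C ((y # a) @ x # b)) (p @ C y # C x # map C (a @ b))"
    using Cons.IH[of "p @ [C y]"] Cons.prems by simp
  have 2: "cocentre_eq_pm n u (p @ C y # C x # map C (a @ b)) (p @ C x # map C ((y # a) @ b))"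
  proof (cases "y = x")
    case True
    then show ?thesis by (simp add: cocentre_eq_pm_refl)
  next
    case False
    then have "cocentre_eq n u (p @ C y # C x # map C (a @ b)) (p @ C x # C y # map C (a @ b)) (-1)"
      using Cons.prems by (intro cocentre_eq_C_swap) auto
    then show ?thesis
      by (simp add: cocentre_eq_pmI)
  qed
  show ?case
    using cocentre_eq_pm_trans[OF 1 2] .
qed

lemma cocentre_eq_C_perm:
  "mset L = mset L' \<Longrightarrow> set L \<subseteq> {1..n} \<Longrightarrow> cocentre_eq_pm n u (p @ map C L) (p @ map C L')"
proof (induction L' arbitrary: L p)
  case Nil
  then show ?case by (simp add: cocentre_eq_pm_refl)
next
  case (Cons x L')
  have "x \<in> set L"
    using Cons.prems(1) by (metis list.set_intros(1) set_mset_mset)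
  then obtain a b where L: "L = a @ x # b"
    by (meson split_list)
  have "cocentre_eq_pm n u (p @ map C L) (p @ C x # map C (a @ b))"
    using Cons.prems cocentre_eq_C_move_front[of a x b p] by (simp add: L)
  moreover have "cocentre_eq_pm n u ((p @ [C x]) @ map C (a @ b)) ((p @ [C x]) @ map C L')"
    using Cons.prems L by (intro Cons.IH) auto
  ultimately show ?case
    by (simp add: cocentre_eq_pm_trans)
qed

lemma cocentre_eq_C_move_front_distinct:
  "set (y # a) \<subseteq> {1..n} \<Longrightarrow> y \<notin> set a \<Longrightarrow>
    cocentre_eq n u (p @ map C a @ [C y]) (p @ C y # map C a) ((-1) ^ length a)"
proof (induction a arbitrary: p)
  case Nil
  then show ?case by (simp add: cocentre_eq_refl)
next
  case (Cons z a)
  have 1: "cocentre_eq n u ((p @ [C z]) @ map C a @ [C y]) ((p @ [C z]) @ C y # map C a) ((-1) ^ length a)"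
    using Cons.IH[of "p @ [C z]"] Cons.prems by simp
  have 2: "cocentre_eq n u (p @ C z # C y # map C a) (p @ C y # C z # map C a) (-1)"
    using Cons.prems by (intro cocentre_eq_C_swap) auto
  show ?case
    using cocentre_eq_trans[OF 1 2] by simp
qed

lemma cocentre_eq_C_cancel_pair:
  assumes "set (a @ x # b @ x # c) \<subseteq> {1..n}"
  shows "cocentre_eq_pm n u (p @ map C (a @ x # b @ x # c)) (p @ map C (a @ b @ c))"
proof -
  have "cocentre_eq_pm n u (p @ map C (a @ x # b @ x # c)) (p @ map C (x # x # a @ b @ c))"
    using assms by (intro cocentre_eq_C_perm) auto
  moreover have "cocentre_eq n u (p @ C x # C x # map C (a @ b @ c)) (p @ map C (a @ b @ c)) 1"
    using assms by (intro cocentre_eq_C_cancel) auto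
  ultimately show ?thesis
    using cocentre_eq_pm_trans cocentre_eq_pmI by fastforce
qed

end

definition psum :: "nat list \<Rightarrow> nat \<Rightarrow> nat" where
  "psum \<gamma> j = sum_list (take j \<gamma>)"

definition cycle_refls :: "nat list \<Rightarrow> nat \<Rightarrow> nat list" where
  "cycle_refls \<gamma> j = [psum \<gamma> j + 1..<psum \<gamma> (Suc j)]"

definition w_refls :: "nat list \<Rightarrow> nat list" where
  "w_refls \<gamma> = concat (map (cycle_refls \<gamma>) [0..<length \<gamma>])"

lemma w_word_eq: "w_word \<gamma> = map S (w_refls \<gamma>)"
  unfolding w_word_def w_refls_def cycle_refls_def cycle_word_def psum_def
  by (simp add: map_concat comp_def)

definition block_count :: "nat list \<Rightarrow> nat list \<Rightarrow> nat \<Rightarrow> nat" where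
  "block_count \<gamma> L j = length (filter (\<lambda>k. k \<in> block \<gamma> j) L)"

definition block_firsts :: "nat list \<Rightarrow> nat list \<Rightarrow> bool" where
  "block_firsts \<gamma> L \<longleftrightarrow> distinct L \<and> (\<forall>k\<in>set L. \<forall>j<length \<gamma>. k \<in> block \<gamma> j \<longrightarrow> k = psum \<gamma> j + 1)"

definition same_block_parities :: "nat list \<Rightarrow> nat list \<Rightarrow> nat list \<Rightarrow> bool" where
  "same_block_parities \<gamma> L L' \<longleftrightarrow> even (length L') = even (length L) \<and>
     (\<forall>j<length \<gamma>. even (block_count \<gamma> L' j) = even (block_count \<gamma> L j))"

lemma block_count_distinct: "distinct L \<Longrightarrow> block_count \<gamma> L j = card (set L \<inter> block \<gamma> j)"
  unfolding block_count_def by (simp add: distinct_length_filter Int_commute)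

lemma same_block_parities_trans:
  "same_block_parities \<gamma> L M \<Longrightarrow> same_block_parities \<gamma> M L' \<Longrightarrow> same_block_parities \<gamma> L L'"
  unfolding same_block_parities_def by simp

lemma block_eq: "block \<gamma> j = {psum \<gamma> j + 1..psum \<gamma> (Suc j)}"
  unfolding block_def psum_def by simp

lemma psum_mono: "j \<le> j' \<Longrightarrow> psum \<gamma> j \<le> psum \<gamma> j'"
proof -
  assume "j \<le> j'"
  then have "take j' \<gamma> = take j \<gamma> @ drop j (take j' \<gamma>)"
    by (metis append_take_drop_id min.absorb1 take_take)
  then show ?thesis
    unfolding psum_def by (metis le_add1 sum_list_append)
qed

lemma psum_Suc: "j < length \<gamma> \<Longrightarrow> psum \<gamma> (Suc j) = psum \<gamma> j + \<gamma> ! j"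
  unfolding psum_def by (simp add: take_Suc_conv_app_nth)

lemma psum_le_sum_list: "psum \<gamma> j \<le> sum_list \<gamma>"
  unfolding psum_def by (metis append_take_drop_id le_add1 sum_list_append)

context
  fixes \<gamma> :: "nat list"
  assumes pos: "\<forall>g\<in>set \<gamma>. 0 < g"
begin

lemma psum_less_Suc: "j < length \<gamma> \<Longrightarrow> psum \<gamma> j < psum \<gamma> (Suc j)"
  using psum_Suc[of j \<gamma>] pos nth_mem[of j \<gamma>] by auto

lemma block_exists:
  assumes "k \<in> {1..sum_list \<gamma>}"
  shows "\<exists>j<length \<gamma>. k \<in> block \<gamma> j"
proof -
  define A where "A = {j. j \<le> length \<gamma> \<and> psum \<gamma> j < k}"
  have fin: "finite A" and "0 \<in> A"
    using assms by (auto simp: A_def psum_def)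
  define j where "j = Max A"
  have jA: "j \<in> A"
    using Max_in[OF fin] \<open>0 \<in> A\<close> unfolding j_def by blast
  have "psum \<gamma> (length \<gamma>) = sum_list \<gamma>"
    by (simp add: psum_def)
  then have j: "j < length \<gamma>"
    using jA assms unfolding A_def by (cases "j = length \<gamma>") auto
  have "Suc j \<notin> A"
    using fin unfolding j_def by (meson Max_ge Suc_n_not_le_n)
  then show ?thesis
    using j jA unfolding A_def block_eq by auto
qed

lemma block_unique:
  assumes "j < length \<gamma>" "j' < length \<gamma>" "k \<in> block \<gamma> j" "k \<in> block \<gamma> j'"
  shows "j = j'"
proof (rule ccontr)
  assume "j \<noteq> j'"
  then have "psum \<gamma> (Suc j) \<le> psum \<gamma> j' \<or> psum \<gamma> (Suc j') \<le> psum \<gamma> j"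
    using psum_mono[of "Suc j" j' \<gamma>] psum_mono[of "Suc j'" j \<gamma>] by linarith
  then show False
    using assms unfolding block_eq by auto
qed

lemma w_refls_split:
  assumes "j < length \<gamma>"
  shows "w_refls \<gamma> = concat (map (cycle_refls \<gamma>) [0..<j]) @ cycle_refls \<gamma> j
      @ concat (map (cycle_refls \<gamma>) [Suc j..<length \<gamma>])"
proof -
  have "[0..<length \<gamma>] = [0..<j] @ [j..<length \<gamma>]"
    using upt_add_eq_append[of 0 j "length \<gamma> - j"] assms by simp
  moreover have "[j..<length \<gamma>] = j # [Suc j..<length \<gamma>]"
    using assms by (simp add: upt_conv_Cons)
  ultimately show ?thesis
    unfolding w_refls_def by simp
qed

lemma refls_before_block:
  assumes "i \<in> set (concat (map (cycle_refls \<gamma>) [0..<j]))"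
  shows "i + 1 \<le> psum \<gamma> j"
proof -
  obtain j' where "j' < j" "i \<in> set (cycle_refls \<gamma> j')"
    using assms by auto
  moreover have "psum \<gamma> (Suc j') \<le> psum \<gamma> j"
    using \<open>j' < j\<close> by (intro psum_mono) simp
  ultimately show ?thesis
    unfolding cycle_refls_def by auto
qed

lemma refls_after_block:
  assumes "i \<in> set (concat (map (cycle_refls \<gamma>) [Suc j..<length \<gamma>]))"
  shows "psum \<gamma> (Suc j) + 1 \<le> i"
proof -
  obtain j' where "Suc j \<le> j'" "i \<in> set (cycle_refls \<gamma> j')"
    using assms by auto
  moreover have "psum \<gamma> (Suc j) \<le> psum \<gamma> j'"
    using \<open>Suc j \<le> j'\<close> by (rule psum_mono)
  ultimately show ?thesis
    unfolding cycle_refls_def by auto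
qed

lemma w_refls_range: "set (w_refls \<gamma>) \<subseteq> {1..<sum_list \<gamma>}"
proof
  fix i
  assume "i \<in> set (w_refls \<gamma>)"
  then obtain j where "i \<in> set (cycle_refls \<gamma> j)"
    unfolding w_refls_def by auto
  then show "i \<in> {1..<sum_list \<gamma>}"
    using psum_le_sum_list[of \<gamma> "Suc j"] unfolding cycle_refls_def by auto
qed

lemma fold_tr_w_refls:
  assumes j: "j < length \<gamma>" and k: "k \<in> block \<gamma> j"
  shows "fold tr (w_refls \<gamma>) k = (if k = psum \<gamma> j + 1 then psum \<gamma> (Suc j) else k - 1)"
proof -
  let ?v = "fold tr (cycle_refls \<gamma> j) k"
  have "fold tr (concat (map (cycle_refls \<gamma>) [0..<j])) k = k"
    using k refls_before_block[of _ j] unfolding block_eq by (intro fold_tr_fixed) fastforce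
  moreover have v: "?v = (if k = psum \<gamma> j + 1 then psum \<gamma> (Suc j) else k - 1)"
    using fold_tr_upt[of "psum \<gamma> j + 1" "psum \<gamma> (Suc j)" k] psum_less_Suc[OF j] k
    unfolding cycle_refls_def block_eq by auto
  moreover have "?v \<le> psum \<gamma> (Suc j)"
    using v k unfolding block_eq by auto
  then have "fold tr (concat (map (cycle_refls \<gamma>) [Suc j..<length \<gamma>])) ?v = ?v"
    using refls_after_block[of _ j] by (intro fold_tr_fixed) fastforce
  ultimately show ?thesis
    using w_refls_split[OF j] by simp
qed

lemma block_count_lower:
  assumes k: "k \<in> set L" and j: "j < length \<gamma>" and kb: "k \<in> block \<gamma> j"
    and not_first: "k \<noteq> psum \<gamma> j + 1" and j': "j' < length \<gamma>"
  shows "block_count \<gamma> ((k - 1) # remove1 k L) j' = block_count \<gamma> L j'"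
proof -
  have "k - 1 \<in> block \<gamma> j"
    using kb not_first by (auto simp: block_eq)
  then have "(k - 1 \<in> block \<gamma> j') = (k \<in> block \<gamma> j')"
    using block_unique[OF j j'] kb by blast
  moreover have "mset L = mset (k # remove1 k L)"
    using k by simp
  then have "block_count \<gamma> L j' = block_count \<gamma> (k # remove1 k L) j'"
    unfolding block_count_def by (metis mset_filter size_mset)
  ultimately show ?thesis
    by (simp add: block_count_def)
qed

context
  fixes n :: nat and u :: complex
  assumes sumn: "sum_list \<gamma> = n"
begin

lemma w_word_C_rotate:
  assumes "set L \<subseteq> {1..n}" and "k \<in> {1..n}"
  shows "cocentre_eq n u (w_word \<gamma> @ map C (L @ [k])) (w_word \<gamma> @ map C (fold tr (w_refls \<gamma>) k # L)) 1"
proof -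
  have 1: "cocentre_eq n u ((w_word \<gamma> @ map C L) @ [C k]) ([C k] @ w_word \<gamma> @ map C L) 1"
    by (rule cocentre_eq_rotate)
  have 2: "cocentre_eq n u ([] @ C k # map S (w_refls \<gamma>) @ map C L)
      ([] @ map S (w_refls \<gamma>) @ C (fold tr (w_refls \<gamma>) k) # map C L) 1"
    using w_refls_range assms(2) sumn by (intro cocentre_eq_C_past_S_word) auto
  show ?thesis
    using cocentre_eq_trans[OF 1 2] by (simp add: w_word_eq)
qed

text \<open>Write $w_\gamma = PBQ$ with $B$ the $j$-th cycle. Since $B$ commutes with $P$ and $Q$,
  $PBQ\,c_L \sim BPQ\,c_L \sim PQ\,c_L B \sim PQB\,c_{L'} \sim PBQ\,c_{L'}$.\<close>
lemma w_word_C_conj_cycle: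
  assumes j: "j < length \<gamma>" and L: "set L \<subseteq> {1..n}"
  shows "cocentre_eq n u (w_word \<gamma> @ map C L) (w_word \<gamma> @ map C (map (fold tr (cycle_refls \<gamma> j)) L)) 1"
proof -
  define P where "P = concat (map (cycle_refls \<gamma>) [0..<j])"
  define B where "B = cycle_refls \<gamma> j"
  define Q where "Q = concat (map (cycle_refls \<gamma>) [Suc j..<length \<gamma>])"
  let ?L' = "map (fold tr B) L"
  have w: "w_word \<gamma> = map S P @ map S B @ map S Q"
    using w_refls_split[OF j] by (simp add: w_word_eq P_def B_def Q_def)
  have range: "set P \<subseteq> {1..<n}" "set B \<subseteq> {1..<n}" "set Q \<subseteq> {1..<n}"
    using w_refls_range sumn unfolding w_refls_split[OF j] P_def B_def Q_def by auto
  have far_PB: "\<forall>i\<in>set P. \<forall>i'\<in>set B. i + 1 < i' \<or> i' + 1 < i"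
    using refls_before_block[of _ j] unfolding P_def B_def cycle_refls_def by fastforce
  have far_BQ: "\<forall>i\<in>set B. \<forall>i'\<in>set Q. i + 1 < i' \<or> i' + 1 < i"
    using refls_after_block[of _ j] unfolding Q_def B_def cycle_refls_def by fastforce
  have 1: "cocentre_eq n u ([] @ map S P @ map S B @ map S Q @ map C L)
      ([] @ map S B @ map S P @ map S Q @ map C L) 1"
    using range far_PB by (intro cocentre_eq_S_words_commute) auto
  have 2: "cocentre_eq n u (map S B @ map S P @ map S Q @ map C L)
      ((map S P @ map S Q @ map C L) @ map S B) 1"
    by (rule cocentre_eq_rotate)
  have 3: "cocentre_eq n u ((map S P @ map S Q) @ map C L @ map S B @ [])
      ((map S P @ map S Q) @ map S B @ map C ?L' @ []) 1"
    using range L by (intro cocentre_eq_C_word_past_S_word) auto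
  have "cocentre_eq n u (map S P @ map S B @ map S Q @ map C ?L')
      (map S P @ map S Q @ map S B @ map C ?L') 1"
    using range far_BQ by (intro cocentre_eq_S_words_commute) auto
  then have 4: "cocentre_eq n u (map S P @ map S Q @ map S B @ map C ?L')
      (map S P @ map S B @ map S Q @ map C ?L') 1"
    by (simp add: cocentre_eq_sym)
  have "cocentre_eq n u (map S P @ map S B @ map S Q @ map C L)
      (map S P @ map S Q @ map C L @ map S B) 1"
    using cocentre_eq_trans[OF 1 2] by simp
  moreover have "cocentre_eq n u (map S P @ map S Q @ map C L @ map S B)
      (map S P @ map S B @ map S Q @ map C ?L') 1"
    using cocentre_eq_trans[OF 3 4] by simp
  ultimately show ?thesis
    using cocentre_eq_trans by (fastforce simp: w B_def)
qed

lemma odd_C_word_block_first_in_HH_comm: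
  assumes j: "j < length \<gamma>" and L: "set L \<subseteq> {1..n}" and odd: "odd (length L)"
    and avoid: "\<forall>k\<in>set L. k \<notin> block \<gamma> j"
  shows "in_HH_comm n u (mon (w_word \<gamma> @ map C (L @ [psum \<gamma> j + 1])))"
proof -
  let ?a = "psum \<gamma> j + 1" and ?b = "psum \<gamma> (Suc j)"
  have ab: "?a \<le> ?b"
    using psum_less_Suc[OF j] by simp
  have b: "?b \<in> {1..n}"
    using ab psum_le_sum_list[of \<gamma> "Suc j"] sumn by simp
  have a: "?a \<in> {1..n}"
    using ab b by simp
  have rotate: "cocentre_eq n u (w_word \<gamma> @ map C (L @ [?a])) (w_word \<gamma> @ map C (?b # L)) 1"
    using w_word_C_rotate[OF L a] fold_tr_w_refls[OF j, of ?a] ab by (simp add: block_eq)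
  have "?b \<notin> set L"
    using avoid ab by (auto simp: block_eq)
  then have "cocentre_eq n u (w_word \<gamma> @ map C L @ [C ?b]) (w_word \<gamma> @ C ?b # map C L) ((-1) ^ length L)"
    using L b by (intro cocentre_eq_C_move_front_distinct) auto
  then have move: "cocentre_eq n u (w_word \<gamma> @ map C (?b # L)) (w_word \<gamma> @ map C (L @ [?b])) (-1)"
    using odd by (simp add: cocentre_eq_sym)
  have "map (fold tr (cycle_refls \<gamma> j)) (L @ [?a]) = L @ [?b]"
    using avoid ab by (auto simp: cycle_refls_def fold_tr_upt block_eq intro!: map_idI)
  then have conj: "cocentre_eq n u (w_word \<gamma> @ map C (L @ [?a])) (w_word \<gamma> @ map C (L @ [?b])) 1"
    using w_word_C_conj_cycle[OF j, of "L @ [?a]"] L a by simp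
  have "cocentre_eq n u (w_word \<gamma> @ map C (L @ [?a])) (w_word \<gamma> @ map C (L @ [?b])) (-1)"
    using cocentre_eq_trans[OF rotate move] by simp
  then have "cocentre_eq n u (w_word \<gamma> @ map C (L @ [?a])) (w_word \<gamma> @ map C (L @ [?a])) (-1)"
    using cocentre_eq_trans[OF _ cocentre_eq_sym[OF conj]] by simp
  then show ?thesis
    by (rule cocentre_eq_self_neg)
qed

lemma w_word_C_lower:
  assumes L: "set L \<subseteq> {1..n}" and k: "k \<in> set L" and j: "j < length \<gamma>"
    and kb: "k \<in> block \<gamma> j" and not_first: "k \<noteq> psum \<gamma> j + 1"
  shows "cocentre_eq_pm n u (w_word \<gamma> @ map C L) (w_word \<gamma> @ map C ((k - 1) # remove1 k L))"
proof -
  have "cocentre_eq_pm n u (w_word \<gamma> @ map C L) (w_word \<gamma> @ map C (remove1 k L @ [k]))"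
    using k L by (intro cocentre_eq_C_perm) auto
  moreover have "set (remove1 k L) \<subseteq> {1..n}"
    using L set_remove1_subset by fastforce
  then have "cocentre_eq n u (w_word \<gamma> @ map C (remove1 k L @ [k])) (w_word \<gamma> @ map C ((k - 1) # remove1 k L)) 1"
    using w_word_C_rotate[of "remove1 k L" k] fold_tr_w_refls[OF j kb] not_first L k by auto
  ultimately show ?thesis
    by (blast intro: cocentre_eq_pm_trans cocentre_eq_pmI)
qed

lemma reduce_to_block_firsts:
  "set L \<subseteq> {1..n} \<Longrightarrow> \<exists>L'. set L' \<subseteq> {1..n} \<and> block_firsts \<gamma> L' \<and> same_block_parities \<gamma> L L'
      \<and> cocentre_eq_pm n u (w_word \<gamma> @ map C L) (w_word \<gamma> @ map C L')"
proof (induction "sum_list L" arbitrary: L rule: less_induct)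
  case less
  consider (dup) a x b c where "L = a @ x # b @ x # c"
    | (lower) k j where "k \<in> set L" "j < length \<gamma>" "k \<in> block \<gamma> j" "k \<noteq> psum \<gamma> j + 1"
    | (reduced) "block_firsts \<gamma> L"
  proof (cases "distinct L")
    case False
    then obtain a x b c where "L = a @ [x] @ b @ [x] @ c"
      using not_distinct_decomp by blast
    then show ?thesis
      using that(1) by simp
  next
    case True
    then show ?thesis
      using that(2,3) unfolding block_firsts_def by blast
  qed
  then show ?case
  proof cases
    case dup
    let ?M = "a @ b @ c"
    have "set ?M \<subseteq> {1..n}" "sum_list ?M < sum_list L"
      using dup less.prems by auto
    then obtain L' where "set L' \<subseteq> {1..n}" "block_firsts \<gamma> L'" "same_block_parities \<gamma> ?M L'"
        "cocentre_eq_pm n u (w_word \<gamma> @ map C ?M) (w_word \<gamma> @ map C L')"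
      using less.hyps by blast
    moreover have "same_block_parities \<gamma> L ?M"
      using dup by (simp add: same_block_parities_def block_count_def)
    moreover have "cocentre_eq_pm n u (w_word \<gamma> @ map C L) (w_word \<gamma> @ map C ?M)"
      using less.prems unfolding dup by (rule cocentre_eq_C_cancel_pair)
    ultimately show ?thesis
      by (blast intro: same_block_parities_trans cocentre_eq_pm_trans)
  next
    case lower
    let ?M = "(k - 1) # remove1 k L"
    have "1 < k"
      using lower by (auto simp: block_eq)
    moreover have "mset L = mset (k # remove1 k L)"
      using lower by simp
    then have "sum_list L = k + sum_list (remove1 k L)"
      by (metis sum_list.Cons sum_mset_sum_list)
    ultimately have "set ?M \<subseteq> {1..n}" "sum_list ?M < sum_list L"
      using less.prems lower set_remove1_subset[of k L] by auto
    then obtain L' where "set L' \<subseteq> {1..n}" "block_firsts \<gamma> L'" "same_block_parities \<gamma> ?M L'"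
        "cocentre_eq_pm n u (w_word \<gamma> @ map C ?M) (w_word \<gamma> @ map C L')"
      using less.hyps by blast
    moreover have "same_block_parities \<gamma> L ?M"
      using lower block_count_lower[OF lower] by (auto simp: same_block_parities_def length_remove1)
    moreover have "cocentre_eq_pm n u (w_word \<gamma> @ map C L) (w_word \<gamma> @ map C ?M)"
      using less.prems lower by (rule w_word_C_lower)
    ultimately show ?thesis
      by (blast intro: same_block_parities_trans cocentre_eq_pm_trans)
  next
    case reduced
    then show ?thesis
      using less.prems by (auto simp: same_block_parities_def intro: cocentre_eq_pm_refl)
  qed
qed

lemma block_firsts_even_counts_Nil:
  assumes L: "set L \<subseteq> {1..n}" and firsts: "block_firsts \<gamma> L"
    and even: "\<forall>j<length \<gamma>. even (block_count \<gamma> L j)"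
  shows "L = []"
proof (rule ccontr)
  assume "L \<noteq> []"
  then obtain k where k: "k \<in> set L"
    by (meson list.set_sel(1))
  moreover have "k \<in> {1..sum_list \<gamma>}"
    using L k sumn by auto
  then obtain j where j: "j < length \<gamma>" "k \<in> block \<gamma> j"
    using block_exists by blast
  have "set L \<inter> block \<gamma> j = {k}"
    using firsts k j unfolding block_firsts_def by blast
  then have "block_count \<gamma> L j = 1"
    using firsts by (simp add: block_count_distinct block_firsts_def)
  then show False
    using even j by fastforce
qed

lemma block_firsts_odd_count_in_HH_comm:
  assumes L: "set L \<subseteq> {1..n}" and firsts: "block_firsts \<gamma> L" and even: "even (length L)"
    and j: "j < length \<gamma>" and odd: "odd (block_count \<gamma> L j)"
  shows "in_HH_comm n u (mon (w_word \<gamma> @ map C L))"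
proof -
  let ?a = "psum \<gamma> j + 1"
  let ?L1 = "remove1 ?a L"
  have dist: "distinct L" and first: "\<And>k. k \<in> set L \<Longrightarrow> k \<in> block \<gamma> j \<Longrightarrow> k = ?a"
    using firsts j unfolding block_firsts_def by auto
  have "set L \<inter> block \<gamma> j \<noteq> {}"
    using odd dist by (auto simp: block_count_distinct)
  then have a: "?a \<in> set L"
    using first by blast
  have "\<forall>k\<in>set ?L1. k \<notin> block \<gamma> j"
    using dist first by auto
  moreover have "length L \<noteq> 0"
    using a by auto
  then have "odd (length ?L1)"
    using a even by (simp add: length_remove1)
  moreover have "set ?L1 \<subseteq> {1..n}"
    using L set_remove1_subset[of ?a L] by blast
  ultimately have "in_HH_comm n u (mon (w_word \<gamma> @ map C (?L1 @ [?a])))"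
    using j by (intro odd_C_word_block_first_in_HH_comm)
  moreover have "cocentre_eq_pm n u (w_word \<gamma> @ map C L) (w_word \<gamma> @ map C (?L1 @ [?a]))"
    using a L by (intro cocentre_eq_C_perm) auto
  ultimately show ?thesis
    using cocentre_eq_pm_in_HH_comm by blast
qed

end

end

theorem proposition3p1p4:
  fixes n :: nat and u :: complex and \<gamma> :: "nat list" and I :: "nat set"
  assumes "\<forall>g\<in>set \<gamma>. 0 < g"
    and "sum_list \<gamma> = n"
    and "I \<subseteq> {1..n}"
    and "even (card I)"
  shows "(if (\<forall>j<length \<gamma>. even (card (I \<inter> block \<gamma> j)))
          then (\<exists>\<epsilon>\<in>{1, -1::complex}.
                  in_HH_comm n u (fa_sub (mon (w_word \<gamma> @ c_word I)) (fa_smult \<epsilon> (mon (w_word \<gamma>)))))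
          else in_HH_comm n u (mon (w_word \<gamma> @ c_word I)))"
proof -
  define L where "L = sorted_list_of_set I"
  have "finite I"
    using assms(3) finite_subset by blast
  then have L: "set L = I" "distinct L" "length L = card I" and cw: "c_word I = map C L"
    by (simp_all add: L_def c_word_def)
  have counts: "block_count \<gamma> L j = card (I \<inter> block \<gamma> j)" for j
    using L by (simp add: block_count_distinct)
  obtain L' where L': "set L' \<subseteq> {1..n}" "block_firsts \<gamma> L'" "same_block_parities \<gamma> L L'"
    and pm: "cocentre_eq_pm n u (w_word \<gamma> @ map C L) (w_word \<gamma> @ map C L')"
    using reduce_to_block_firsts[OF assms(1,2), of L u] L(1) assms(3) by blast
  show ?thesis
  proof (cases "\<forall>j<length \<gamma>. even (card (I \<inter> block \<gamma> j))")
    case True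
    then have "L' = []"
      using block_firsts_even_counts_Nil[OF assms(1,2) L'(1,2)] L'(3) counts
      by (auto simp: same_block_parities_def)
    then show ?thesis
      using True pm by (simp add: cw cocentre_eq_pm_def cocentre_eq_def)
  next
    case False
    then obtain j where j: "j < length \<gamma>" "odd (card (I \<inter> block \<gamma> j))"
      by blast
    then have "in_HH_comm n u (mon (w_word \<gamma> @ map C L'))"
      using block_firsts_odd_count_in_HH_comm[OF assms(1,2) L'(1,2) _ j(1)] L'(3) counts L(3) assms(4)
      by (auto simp: same_block_parities_def)
    then have "in_HH_comm n u (mon (w_word \<gamma> @ c_word I))"
      using cocentre_eq_pm_in_HH_comm[OF pm] by (simp add: cw)
    then show ?thesis
      by (simp only: if_not_P[OF False])
  qed
qed

end
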